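(* Let $\mathcal F\subset\mathcal F_X$ be a convex set of feasible environments. For each decision rule $p$ and each history $h$, $$\inf_{F\in\mathcal F(h)}\frac{U_p(F,h)}{V(F,h)}=\inf_{F\in\mathcal F}\frac{U_p(F,h)}{V(F,h)}.$$
   Context: Sequential search model. Fix a discount factor $\delta\in(0,1)$, a Borel set $X\subset\mathbb{R}_+$ with $0\in X$, and an outside option $x_0>0$. Let $\mathcal F_X$ be the set of Borel probability distributions on $X$ with finite mean ("environments"). A history is $h_t=(x_0,x_1,\dots,x_t)$, $t\ge0$, $x_i\in X$, with best-so-far alternative $y_t=\max\{x_0,\dots,x_t\}$. A decision rule $p$ assigns to each history $h$ a stopping probability $p(h)\in[0,1]$. Given any environment $F$ and a history $h_t$, future alternatives $x_{t+1},x_{t+2},\dots$ are i.i.d. with law $F$; at each round $s\ge t$ the individual stops with probability $p(h_s)$, and stopping at round $s$ yields $\delta^{s-t}y_s$ (never stopping yields $0$). $U_p(F,h)$ is this expected payoff (defined for every $F$, whether or not consistent with $h$), and $V(F,h)=\sup_pU_p(F,h)$. An environment $F$ is consistent with $h_t$ if the sequence $x_1,\dots,x_t$ occurs with positive probability under $F$; $\mathcal F(h)$ is the set of environments in $\mathcal F$ consistent with $h$. *)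

theory Defs
  imports "HOL-Probability.Probability"
begin

definition environments :: "real set \<Rightarrow> real measure set" where
  "environments X = {F. sets F = sets borel \<and> prob_space F \<and>
      emeasure F (UNIV - X) = 0 \<and> integrable F (\<lambda>x. x)}"

definition best :: "real list \<Rightarrow> real" where
  "best h = Max (set h)"

definition decision_rule :: "(real list \<Rightarrow> real) \<Rightarrow> bool" where
  "decision_rule p \<longleftrightarrow> (\<forall>h. 0 \<le> p h \<and> p h \<le> 1)"

text \<open>Realised expected (over the randomisation of the rule) discounted payoff, given
  history h and the stream w of future alternatives x_{t+1}, x_{t+2}, ...:
  stopping at round t+k happens with probability p(h_{t+k}) times the product of
  the continuation probabilities before, and yields delta^k * y_{t+k}.\<close>
definition stop_payoff ::
  "real \<Rightarrow> (real list \<Rightarrow> real) \<Rightarrow> real list \<Rightarrow> real stream \<Rightarrow> ennreal" where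
  "stop_payoff \<delta> p h w = (\<Sum>k. ennreal (\<delta> ^ k * best (h @ stake k w) * p (h @ stake k w)
        * (\<Prod>j<k. 1 - p (h @ stake j w))))"

definition U :: "real \<Rightarrow> (real list \<Rightarrow> real) \<Rightarrow> real measure \<Rightarrow> real list \<Rightarrow> ennreal" where
  "U \<delta> p F h = (\<integral>\<^sup>+ w. stop_payoff \<delta> p h w \<partial>(stream_space F))"

definition V :: "real \<Rightarrow> real measure \<Rightarrow> real list \<Rightarrow> ennreal" where
  "V \<delta> F h = (SUP p \<in> {p. decision_rule p}. U \<delta> p F h)"

text \<open>F is consistent with h = [x0, x1, ..., xt] iff x1,...,xt occurs with positive
  probability under i.i.d. draws from F, i.e. each x_i is an atom of F.\<close>
definition consistent :: "real measure \<Rightarrow> real list \<Rightarrow> bool" where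
  "consistent F h \<longleftrightarrow> (\<Prod>x\<leftarrow>tl h. emeasure F {x}) > 0"

definition mix :: "real \<Rightarrow> real measure \<Rightarrow> real measure \<Rightarrow> real measure" where
  "mix a F G = measure_of UNIV (sets borel)
     (\<lambda>A. ennreal a * emeasure F A + ennreal (1 - a) * emeasure G A)"

definition convex_envs :: "real measure set \<Rightarrow> bool" where
  "convex_envs \<F> \<longleftrightarrow> (\<forall>F\<in>\<F>. \<forall>G\<in>\<F>. \<forall>a\<in>{0..1}. mix a F G \<in> \<F>)"

end

(*
  Fix F in the family and a consistent G in it. The mixtures mix a F G belong to the family
  and, for a < 1, are consistent, since every atom of G stays an atom. As a tends to 1 from
  below, U_p and V at mix a F G converge to their values at F: with probability at least a ^ K
  the first K alternatives behave as under F, and because of discounting and finite means the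
  payoff collected after round K is uniformly small. The estimate is uniform in the decision
  rule, which yields the convergence of V = sup U as well. Since V >= best h > 0, the ratios
  converge too, so the infimum over consistent environments is at most U_p(F,h)/V(F,h).
  Of the hypotheses on the history only x0 > 0 matters.
*)
theory Submission
  imports Defs
begin

section \<open>Lower integrals over stream spaces\<close>

lemma nn_integral_eq_SUP_measurable:
  "integral\<^sup>N M f = (SUP g \<in> {g \<in> borel_measurable M. g \<le> f}. integral\<^sup>N M g)"
proof (rule antisym)
  show "integral\<^sup>N M f \<le> (SUP g \<in> {g \<in> borel_measurable M. g \<le> f}. integral\<^sup>N M g)"
    unfolding nn_integral_def[of M f]
  proof (rule SUP_least)
    fix g assume "g \<in> {g. simple_function M g \<and> g \<le> f}"
    then have g: "simple_function M g" "g \<le> f" by auto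
    have "integral\<^sup>S M g = integral\<^sup>N M g" by (rule nn_integral_eq_simple_integral[OF g(1), symmetric])
    also have "\<dots> \<le> (SUP g \<in> {g \<in> borel_measurable M. g \<le> f}. integral\<^sup>N M g)"
      using g borel_measurable_simple_function by (intro SUP_upper) auto
    finally show "integral\<^sup>S M g \<le> \<dots>" .
  qed
qed (auto intro!: SUP_least nn_integral_mono simp: le_fun_def)

lemma nn_integral_add_le:
  assumes v: "v \<in> borel_measurable M"
  shows "(\<integral>\<^sup>+x. u x + v x \<partial>M) \<le> integral\<^sup>N M u + integral\<^sup>N M v"
  unfolding nn_integral_eq_SUP_measurable[of M "\<lambda>x. u x + v x"]
proof (rule SUP_least, safe)
  fix g assume g: "g \<in> borel_measurable M" and le: "g \<le> (\<lambda>x. u x + v x)"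
  define d where "d = (\<lambda>x. if v x = \<top> then 0 else g x - v x)"
  have d: "d \<in> borel_measurable M" unfolding d_def using g v by measurable
  have "integral\<^sup>N M g \<le> (\<integral>\<^sup>+x. d x + v x \<partial>M)"
    unfolding d_def using le diff_add_self_ennreal by (intro nn_integral_mono) (auto simp: le_fun_def)
  also have "\<dots> = integral\<^sup>N M d + integral\<^sup>N M v" using d v by (rule nn_integral_add)
  also have "integral\<^sup>N M d \<le> integral\<^sup>N M u"
    using le unfolding d_def
    by (intro nn_integral_mono) (auto simp: le_fun_def ennreal_minus_le_iff add.commute top_unique)
  finally show "integral\<^sup>N M g \<le> integral\<^sup>N M u + integral\<^sup>N M v" by (simp add: add_right_mono)
qed

definition prefix_determined :: "nat \<Rightarrow> ('a stream \<Rightarrow> 'b) \<Rightarrow> bool" where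
  "prefix_determined K f \<longleftrightarrow> (\<forall>w w'. stake K w = stake K w' \<longrightarrow> f w = f w')"

lemma prefix_determinedD: "prefix_determined K f \<Longrightarrow> stake K w = stake K w' \<Longrightarrow> f w = f w'"
  unfolding prefix_determined_def by blast

lemma prefix_determined_mono:
  assumes "k \<le> K" "prefix_determined k f" shows "prefix_determined K f"
  unfolding prefix_determined_def
proof (intro allI impI)
  fix w w' :: "'a stream" assume "stake K w = stake K w'"
  then have "stake k w = stake k w'" using \<open>k \<le> K\<close> by (metis min.absorb1 take_stake)
  then show "f w = f w'" using assms(2) by (rule prefix_determinedD[rotated])
qed

lemma prefix_determined_sum:
  assumes "\<And>k. k \<in> A \<Longrightarrow> prefix_determined K (f k)"
  shows "prefix_determined K (\<lambda>w. \<Sum>k\<in>A. f k w)"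
  unfolding prefix_determined_def
  using prefix_determinedD[OF assms] by (intro allI impI sum.cong) blast+

lemma prefix_determined_0: "prefix_determined 0 f \<Longrightarrow> f w = f w'"
  by (erule prefix_determinedD) simp

lemma prefix_determined_Suc_Cons:
  "prefix_determined (Suc K) f \<Longrightarrow> prefix_determined K (\<lambda>w. f (x ## w))"
  unfolding prefix_determined_def by simp

lemma (in prob_space) nn_integral_stream_space_split:
  assumes "g \<in> borel_measurable (stream_space M)"
  shows "(\<integral>\<^sup>+w. g w \<partial>stream_space M) =
    (\<integral>\<^sup>+w. \<integral>\<^sup>+v. g (stake K w @- v) \<partial>stream_space M \<partial>stream_space M)"
  using assms
proof (induction K arbitrary: g)
  case 0
  interpret S: prob_space "stream_space M" by (rule prob_space_stream_space)
  show ?case by (simp add: S.emeasure_space_1)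
next
  case (Suc K)
  interpret S: prob_space "stream_space M" by (rule prob_space_stream_space)
  note [measurable] = Suc.prems
  have "(\<lambda>w. \<integral>\<^sup>+v. g (stake (Suc K) w @- v) \<partial>stream_space M) \<in> borel_measurable (stream_space M)"
    by (rule S.borel_measurable_nn_integral) measurable
  then have "(\<integral>\<^sup>+w. \<integral>\<^sup>+v. g (stake (Suc K) w @- v) \<partial>stream_space M \<partial>stream_space M)
     = (\<integral>\<^sup>+x. \<integral>\<^sup>+w. \<integral>\<^sup>+v. g (x ## (stake K w @- v)) \<partial>stream_space M \<partial>stream_space M \<partial>M)"
    by (simp add: nn_integral_stream_space)
  also have "\<dots> = (\<integral>\<^sup>+x. \<integral>\<^sup>+u. g (x ## u) \<partial>stream_space M \<partial>M)"
    by (intro nn_integral_cong Suc.IH[symmetric]) measurable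
  also have "\<dots> = (\<integral>\<^sup>+w. g w \<partial>stream_space M)"
    by (rule nn_integral_stream_space[symmetric]) measurable
  finally show ?case ..
qed

text \<open>Decision rules need not be measurable, so payoffs are lower integrals. For a
  prefix-determined integrand the measurable minorants may be taken prefix-determined as well,
  by averaging out the coordinates after the prefix.\<close>
lemma (in prob_space) nn_integral_stream_space_prefix_SUP:
  assumes f: "prefix_determined K f"
  shows "(\<integral>\<^sup>+w. f w \<partial>stream_space M) = (SUP g \<in> {g \<in> borel_measurable (stream_space M).
      prefix_determined K g \<and> g \<le> f}. integral\<^sup>N (stream_space M) g)"
proof (rule antisym)
  interpret S: prob_space "stream_space M" by (rule prob_space_stream_space)
  show "(\<integral>\<^sup>+w. f w \<partial>stream_space M) \<le> (SUP g \<in> {g \<in> borel_measurable (stream_space M).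
      prefix_determined K g \<and> g \<le> f}. integral\<^sup>N (stream_space M) g)"
    unfolding nn_integral_eq_SUP_measurable[of _ f]
  proof (rule SUP_least, safe)
    fix g assume g[measurable]: "g \<in> borel_measurable (stream_space M)" and le: "g \<le> f"
    define g' where "g' = (\<lambda>w. \<integral>\<^sup>+v. g (stake K w @- v) \<partial>stream_space M)"
    have "g' \<in> borel_measurable (stream_space M)"
      unfolding g'_def by (rule S.borel_measurable_nn_integral) measurable
    moreover have "prefix_determined K g'"
      unfolding g'_def prefix_determined_def by simp
    moreover have "g' w \<le> f w" for w
    proof -
      have "g (stake K w @- v) \<le> f w" for v
        using le_funD[OF le, of "stake K w @- v"] prefix_determinedD[OF f, of "stake K w @- v" w]
        by (simp add: stake_shift)
      then have "g' w \<le> (\<integral>\<^sup>+v. f w \<partial>stream_space M)"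
        unfolding g'_def by (intro nn_integral_mono)
      then show ?thesis by (simp add: S.emeasure_space_1)
    qed
    moreover have "integral\<^sup>N (stream_space M) g = integral\<^sup>N (stream_space M) g'"
      unfolding g'_def by (rule nn_integral_stream_space_split[OF g])
    ultimately show "integral\<^sup>N (stream_space M) g \<le> (SUP g \<in> {g \<in> borel_measurable (stream_space M).
      prefix_determined K g \<and> g \<le> f}. integral\<^sup>N (stream_space M) g)"
      by (intro SUP_upper2[of g']) (simp_all add: le_fun_def)
  qed
  show "(SUP g \<in> {g \<in> borel_measurable (stream_space M).
      prefix_determined K g \<and> g \<le> f}. integral\<^sup>N (stream_space M) g) \<le> (\<integral>\<^sup>+w. f w \<partial>stream_space M)"
    by (rule SUP_least) (auto intro: nn_integral_mono simp: le_fun_def)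
qed

locale stream_domination = F: prob_space F + H: prob_space H
  for F H :: "'a measure" and c :: ennreal +
  assumes sets_eq: "sets F = sets H"
    and dominated: "\<And>\<phi>. \<phi> \<in> borel_measurable F \<Longrightarrow> c * integral\<^sup>N F \<phi> \<le> integral\<^sup>N H \<phi>"
begin

lemma measurable_stream_space_eq:
  "borel_measurable (stream_space F) = borel_measurable (stream_space H)"
  by (rule measurable_cong_sets[OF sets_stream_space_cong[OF sets_eq] refl])

lemma nn_integral_stream_space_measurable_ge:
  assumes "g \<in> borel_measurable (stream_space F)" "prefix_determined K g"
  shows "c ^ K * integral\<^sup>N (stream_space F) g \<le> integral\<^sup>N (stream_space H) g"
  using assms
proof (induction K arbitrary: g)
  case 0
  interpret SF: prob_space "stream_space F" by (rule F.prob_space_stream_space)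
  interpret SH: prob_space "stream_space H" by (rule H.prob_space_stream_space)
  obtain w where "g = (\<lambda>_. g w)" using prefix_determined_0[OF 0(2)] by blast
  then show ?case by (metis SF.emeasure_space_1 SH.emeasure_space_1 mult_1 mult.right_neutral
        nn_integral_const power_0 order_refl)
next
  case (Suc K)
  interpret SF: prob_space "stream_space F" by (rule F.prob_space_stream_space)
  note g[measurable] = Suc.prems(1)
  have gH[measurable]: "g \<in> borel_measurable (stream_space H)"
    using g measurable_stream_space_eq by blast
  have inner[measurable]: "(\<lambda>x. \<integral>\<^sup>+w. g (x ## w) \<partial>stream_space F) \<in> borel_measurable F"
    by (rule SF.borel_measurable_nn_integral) measurable
  have "c ^ Suc K * integral\<^sup>N (stream_space F) g
      = c * (\<integral>\<^sup>+x. c ^ K * \<integral>\<^sup>+w. g (x ## w) \<partial>stream_space F \<partial>F)"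
    by (simp add: F.nn_integral_stream_space[OF g] nn_integral_cmult mult.assoc)
  also have "\<dots> \<le> (\<integral>\<^sup>+x. c ^ K * \<integral>\<^sup>+w. g (x ## w) \<partial>stream_space F \<partial>H)"
    by (rule dominated) measurable
  also have "\<dots> \<le> (\<integral>\<^sup>+x. \<integral>\<^sup>+w. g (x ## w) \<partial>stream_space H \<partial>H)"
  proof (rule nn_integral_mono)
    fix x assume "x \<in> space H"
    then have "x \<in> space F" using sets_eq_imp_space_eq[OF sets_eq] by simp
    then have "(\<lambda>w. g (x ## w)) \<in> borel_measurable (stream_space F)" by measurable
    with Suc.prems(2) show "c ^ K * (\<integral>\<^sup>+w. g (x ## w) \<partial>stream_space F) \<le> (\<integral>\<^sup>+w. g (x ## w) \<partial>stream_space H)"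
      by (intro Suc.IH prefix_determined_Suc_Cons)
  qed
  also have "\<dots> = integral\<^sup>N (stream_space H) g"
    by (rule H.nn_integral_stream_space[OF gH, symmetric])
  finally show ?case .
qed

lemma nn_integral_stream_space_ge:
  assumes f: "prefix_determined K f"
  shows "c ^ K * integral\<^sup>N (stream_space F) f \<le> integral\<^sup>N (stream_space H) f"
proof -
  have "c ^ K * integral\<^sup>N (stream_space F) f = (SUP g \<in> {g \<in> borel_measurable (stream_space F).
      prefix_determined K g \<and> g \<le> f}. c ^ K * integral\<^sup>N (stream_space F) g)"
    by (simp add: F.nn_integral_stream_space_prefix_SUP[OF f] SUP_mult_left_ennreal)
  also have "\<dots> \<le> integral\<^sup>N (stream_space H) f"
  proof (rule SUP_least, safe)
    fix g assume g: "g \<in> borel_measurable (stream_space F)" "prefix_determined K g" "g \<le> f"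
    then have "c ^ K * integral\<^sup>N (stream_space F) g \<le> integral\<^sup>N (stream_space H) g"
      by (intro nn_integral_stream_space_measurable_ge)
    also have "\<dots> \<le> integral\<^sup>N (stream_space H) f"
      using g(3) by (intro nn_integral_mono) (simp add: le_fun_def)
    finally show "c ^ K * integral\<^sup>N (stream_space F) g \<le> integral\<^sup>N (stream_space H) f" .
  qed
  finally show ?thesis .
qed

text \<open>The part of H beyond the scaled copy of F weighs f at most as much as its majorant B;
  stated additively to avoid subtraction in ennreal.\<close>
lemma nn_integral_stream_space_excess:
  assumes f: "prefix_determined K f" and B: "B \<in> borel_measurable (stream_space H)"
    "prefix_determined K B" and fB: "f \<le> B"
  shows "integral\<^sup>N (stream_space H) f + c ^ K * integral\<^sup>N (stream_space F) B
    \<le> c ^ K * integral\<^sup>N (stream_space F) f + integral\<^sup>N (stream_space H) B"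
proof -
  let ?G = "{g \<in> borel_measurable (stream_space H). prefix_determined K g \<and> g \<le> f}"
  have "(\<lambda>_. 0) \<in> ?G" by (auto simp: prefix_determined_def le_fun_def)
  then have "integral\<^sup>N (stream_space H) f + c ^ K * integral\<^sup>N (stream_space F) B
      = (SUP g \<in> ?G. integral\<^sup>N (stream_space H) g + c ^ K * integral\<^sup>N (stream_space F) B)"
    unfolding H.nn_integral_stream_space_prefix_SUP[OF f] by (subst ennreal_SUP_add_left) auto
  also have "\<dots> \<le> c ^ K * integral\<^sup>N (stream_space F) f + integral\<^sup>N (stream_space H) B"
  proof (rule SUP_least, safe)
    fix g assume g[measurable]: "g \<in> borel_measurable (stream_space H)" and
      g_prefix: "prefix_determined K g" and gf: "g \<le> f"
    note [measurable] = B(1)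
    let ?d = "\<lambda>w. B w - g w"
    have d_prefix: "prefix_determined K ?d"
      unfolding prefix_determined_def
    proof (intro allI impI)
      fix w w' :: "'a stream" assume "stake K w = stake K w'"
      then show "B w - g w = B w' - g w'"
        using prefix_determinedD[OF B(2), of w w'] prefix_determinedD[OF g_prefix, of w w'] by simp
    qed
    have "g w \<le> B w" for w using gf fB by (meson le_fun_def order_trans)
    then have B_eq: "B w = g w + ?d w" for w by (simp add: add_diff_inverse_ennreal)
    have gF: "g \<in> borel_measurable (stream_space F)" using g measurable_stream_space_eq by blast
    have dH: "?d \<in> borel_measurable (stream_space H)" by measurable
    then have dF: "?d \<in> borel_measurable (stream_space F)" using measurable_stream_space_eq by blast
    have split: "integral\<^sup>N (stream_space M) B = integral\<^sup>N (stream_space M) g + integral\<^sup>N (stream_space M) ?d"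
      if "g \<in> borel_measurable (stream_space M)" "?d \<in> borel_measurable (stream_space M)" for M
      by (subst nn_integral_add[OF that, symmetric]) (rule nn_integral_cong, rule B_eq)
    have "integral\<^sup>N (stream_space H) g + c ^ K * integral\<^sup>N (stream_space F) B
        = integral\<^sup>N (stream_space H) g + c ^ K * integral\<^sup>N (stream_space F) g
          + c ^ K * integral\<^sup>N (stream_space F) ?d"
      by (simp add: split[OF gF dF] distrib_left add.assoc)
    also have "\<dots> \<le> integral\<^sup>N (stream_space H) g + c ^ K * integral\<^sup>N (stream_space F) f
          + integral\<^sup>N (stream_space H) ?d"
    proof (intro add_mono order_refl mult_left_mono)
      show "integral\<^sup>N (stream_space F) g \<le> integral\<^sup>N (stream_space F) f"
        using gf by (intro nn_integral_mono) (simp add: le_fun_def)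
      show "c ^ K * integral\<^sup>N (stream_space F) ?d \<le> integral\<^sup>N (stream_space H) ?d"
        by (rule nn_integral_stream_space_measurable_ge[OF dF d_prefix])
    qed simp
    also have "\<dots> = c ^ K * integral\<^sup>N (stream_space F) f + integral\<^sup>N (stream_space H) B"
      by (simp add: split[OF g dH] ac_simps)
    finally show "integral\<^sup>N (stream_space H) g + c ^ K * integral\<^sup>N (stream_space F) B
        \<le> c ^ K * integral\<^sup>N (stream_space F) f + integral\<^sup>N (stream_space H) B" .
  qed
  finally show ?thesis .
qed

end

section \<open>Bounds on the payoff\<close>

definition stop_term :: "real \<Rightarrow> (real list \<Rightarrow> real) \<Rightarrow> real list \<Rightarrow> nat \<Rightarrow> real stream \<Rightarrow> ennreal" where
  "stop_term \<delta> p h k w = ennreal (\<delta> ^ k * best (h @ stake k w) * p (h @ stake k w)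
        * (\<Prod>j<k. 1 - p (h @ stake j w)))"

definition stop_majorant :: "real \<Rightarrow> real list \<Rightarrow> nat \<Rightarrow> real stream \<Rightarrow> ennreal" where
  "stop_majorant \<delta> h k w = ennreal (\<delta> ^ k * (best h + (\<Sum>i<k. \<bar>w !! i\<bar>)))"

definition abs_mean :: "real measure \<Rightarrow> real" where
  "abs_mean M = (\<integral>x. \<bar>x\<bar> \<partial>M)"

text \<open>The expectation of stop_majorant under an environment with absolute mean m.\<close>
definition majorant_mean :: "real \<Rightarrow> real list \<Rightarrow> real \<Rightarrow> nat \<Rightarrow> real" where
  "majorant_mean \<delta> h m k = \<delta> ^ k * (best h + real k * m)"

lemma stop_payoff_eq_suminf: "stop_payoff \<delta> p h w = (\<Sum>k. stop_term \<delta> p h k w)"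
  by (simp add: stop_payoff_def stop_term_def)

lemma best_le_best_append: "h \<noteq> [] \<Longrightarrow> best h \<le> best (h @ l)"
  unfolding best_def by (intro Max_mono) auto

lemma best_append_stake_le:
  assumes h: "h \<noteq> []" and b: "0 \<le> best h"
  shows "best (h @ stake k w) \<le> best h + (\<Sum>i<k. \<bar>w !! i\<bar>)"
  unfolding best_def[of "h @ _"]
proof (rule Max.boundedI)
  fix y assume "y \<in> set (h @ stake k w)"
  then consider "y \<in> set h" | i where "i < k" "y = w !! i"
    by (auto simp: in_set_conv_nth)
  then show "y \<le> best h + (\<Sum>i<k. \<bar>w !! i\<bar>)"
  proof cases
    case 1
    then show ?thesis unfolding best_def by (simp add: add_increasing2 sum_nonneg)
  next
    case (2 i)
    then have "\<bar>w !! i\<bar> \<le> (\<Sum>i<k. \<bar>w !! i\<bar>)" by (intro member_le_sum) auto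
    then show ?thesis using 2 b by linarith
  qed
qed (use h in auto)

lemma stop_term_le_stop_majorant:
  assumes d: "0 \<le> \<delta>" and p: "decision_rule p" and h: "h \<noteq> []" and b: "0 \<le> best h"
  shows "stop_term \<delta> p h k w \<le> stop_majorant \<delta> h k w"
proof -
  let ?B = "best (h @ stake k w)" and ?q = "p (h @ stake k w)" and ?P = "\<Prod>j<k. 1 - p (h @ stake j w)"
  have p01: "0 \<le> p l" "p l \<le> 1" for l using p unfolding decision_rule_def by auto
  have "0 \<le> ?P" "?P \<le> 1" using p01 by (auto intro: prod_nonneg prod_le_1)
  then have "?q * ?P \<le> 1" using p01 by (simp add: mult_le_one)
  moreover have "0 \<le> ?B" using best_le_best_append[OF h] b order_trans by blast
  ultimately have "\<delta> ^ k * ?B * (?q * ?P) \<le> \<delta> ^ k * ?B"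
    using d by (simp add: mult_left_le)
  also have "\<dots> \<le> \<delta> ^ k * (best h + (\<Sum>i<k. \<bar>w !! i\<bar>))"
    using best_append_stake_le[OF h b] d by (simp add: mult_left_mono)
  finally show ?thesis unfolding stop_term_def stop_majorant_def by (intro ennreal_leI) (simp add: mult.assoc)
qed

lemma prefix_determined_stop_term: "prefix_determined k (stop_term \<delta> p h k)"
  unfolding prefix_determined_def
proof (intro allI impI)
  fix w w' :: "real stream" assume "stake k w = stake k w'"
  then have "stake j w = stake j w'" if "j \<le> k" for j using that by (metis min.absorb1 take_stake)
  moreover have "(\<Prod>j<k. 1 - p (h @ stake j w)) = (\<Prod>j<k. 1 - p (h @ stake j w'))"
    using calculation by (intro prod.cong) auto
  ultimately show "stop_term \<delta> p h k w = stop_term \<delta> p h k w'"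
    unfolding stop_term_def by simp
qed

lemma prefix_determined_stop_majorant: "prefix_determined k (stop_majorant \<delta> h k)"
  unfolding prefix_determined_def
proof (intro allI impI)
  fix w w' :: "real stream" assume "stake k w = stake k w'"
  then have "w !! i = w' !! i" if "i < k" for i using that by (metis stake_nth)
  then have "(\<Sum>i<k. \<bar>w !! i\<bar>) = (\<Sum>i<k. \<bar>w' !! i\<bar>)" by (intro sum.cong) auto
  then show "stop_majorant \<delta> h k w = stop_majorant \<delta> h k w'"
    unfolding stop_majorant_def by simp
qed

lemma prefix_determined_sum_stop_term: "prefix_determined K (\<lambda>w. \<Sum>k<K. stop_term \<delta> p h k w)"
  by (intro prefix_determined_sum prefix_determined_mono[OF _ prefix_determined_stop_term]) simp

lemma prefix_determined_sum_stop_majorant: "prefix_determined K (\<lambda>w. \<Sum>k<K. stop_majorant \<delta> h k w)"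
  by (intro prefix_determined_sum prefix_determined_mono[OF _ prefix_determined_stop_majorant]) simp

lemma abs_mean_nonneg: "0 \<le> abs_mean M"
  unfolding abs_mean_def by simp

lemma majorant_mean_nonneg: "0 \<le> \<delta> \<Longrightarrow> 0 \<le> best h \<Longrightarrow> 0 \<le> m \<Longrightarrow> 0 \<le> majorant_mean \<delta> h m k"
  unfolding majorant_mean_def by simp

lemma majorant_mean_mono: "0 \<le> \<delta> \<Longrightarrow> m \<le> m' \<Longrightarrow> majorant_mean \<delta> h m k \<le> majorant_mean \<delta> h m' k"
  unfolding majorant_mean_def by (intro mult_left_mono add_left_mono) auto

lemma summable_majorant_mean:
  assumes "0 \<le> \<delta>" "\<delta> < 1"
  shows "summable (majorant_mean \<delta> h m)"
proof -
  have "summable (\<lambda>n. diffs (\<lambda>_. 1) n * \<delta> ^ n)"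
    using assms by (intro termdiff_converges[of \<delta> 1]) (auto intro: summable_geometric)
  then have "summable (\<lambda>k. real (Suc k) * \<delta> ^ k)" by (simp add: diffs_def)
  then have "summable (\<lambda>k. real k * \<delta> ^ k)"
    by (rule summable_comparison_test[rotated]) (use assms in \<open>auto intro!: exI[of _ 0] mult_right_mono\<close>)
  then have "summable (\<lambda>k. best h * \<delta> ^ k + m * (real k * \<delta> ^ k))"
    using assms by (intro summable_add summable_mult summable_geometric) auto
  then show ?thesis unfolding majorant_mean_def by (simp add: algebra_simps)
qed

lemma summable_majorant_mean_shift:
  "0 \<le> \<delta> \<Longrightarrow> \<delta> < 1 \<Longrightarrow> summable (\<lambda>j. majorant_mean \<delta> h m (j + K))"
  by (simp add: summable_iff_shift summable_majorant_mean)

lemma suminf_majorant_mean_shift_mono: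
  assumes "0 \<le> \<delta>" "\<delta> < 1" and "m \<le> m'"
  shows "(\<Sum>j. majorant_mean \<delta> h m (j + K)) \<le> (\<Sum>j. majorant_mean \<delta> h m' (j + K))"
  using assms by (intro suminf_le majorant_mean_mono summable_majorant_mean_shift) auto

lemma (in prob_space) nn_integral_snth:
  assumes [measurable]: "\<phi> \<in> borel_measurable M"
  shows "(\<integral>\<^sup>+w. \<phi> (w !! i) \<partial>stream_space M) = integral\<^sup>N M \<phi>"
proof (induction i)
  case 0
  interpret S: prob_space "stream_space M" by (rule prob_space_stream_space)
  show ?case by (subst nn_integral_stream_space) (auto simp: S.emeasure_space_1)
next
  case (Suc i)
  then show ?case by (subst nn_integral_stream_space) (auto simp: emeasure_space_1)
qed

lemma truncation_le_U: "(\<integral>\<^sup>+w. (\<Sum>k<K. stop_term \<delta> p h k w) \<partial>stream_space M) \<le> U \<delta> p M h"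
  unfolding U_def stop_payoff_eq_suminf by (intro nn_integral_mono sum_le_suminf) auto

lemma U_le_V: "decision_rule p \<Longrightarrow> U \<delta> p M h \<le> V \<delta> M h"
  unfolding V_def by (auto intro: SUP_upper)

text \<open>Witnessed by the rule that stops at once.\<close>
lemma best_le_V:
  assumes "prob_space M" shows "ennreal (best h) \<le> V \<delta> M h"
proof -
  interpret S: prob_space "stream_space M" by (rule prob_space.prob_space_stream_space[OF assms])
  have "stop_payoff \<delta> (\<lambda>_. 1) h w = ennreal (best h)" for w
    unfolding stop_payoff_eq_suminf by (subst suminf_finite[of "{0}"]) (auto simp: stop_term_def power_0_left)
  then have "stop_payoff \<delta> (\<lambda>_. 1) h = (\<lambda>_. ennreal (best h))" ..
  then have "U \<delta> (\<lambda>_. 1) M h = ennreal (best h)" unfolding U_def by (simp add: S.emeasure_space_1)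
  moreover have "U \<delta> (\<lambda>_. 1) M h \<le> V \<delta> M h"
    by (rule U_le_V) (simp add: decision_rule_def)
  ultimately show ?thesis by simp
qed

text \<open>Membership in environments X without the support condition, which the argument never
  uses.\<close>
locale environment = prob_space M for M :: "real measure" +
  assumes sets_eq_borel: "sets M = sets borel"
    and integrable_id: "integrable M (\<lambda>x. x)"
begin

lemma measurable_snth_borel[measurable]: "(\<lambda>w. w !! i) \<in> borel_measurable (stream_space M)"
  using measurable_snth[of i M] measurable_cong_sets[OF refl sets_eq_borel] by blast

lemma measurable_stop_majorant[measurable]: "stop_majorant \<delta> h k \<in> borel_measurable (stream_space M)"
  unfolding stop_majorant_def by measurable

lemma nn_integral_abs: "(\<integral>\<^sup>+x. ennreal \<bar>x\<bar> \<partial>M) = ennreal (abs_mean M)"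
  unfolding abs_mean_def using integrable_abs[OF integrable_id]
  by (intro nn_integral_eq_integral) auto

lemma nn_integral_stop_majorant:
  assumes d: "0 \<le> \<delta>" and b: "0 \<le> best h"
  shows "(\<integral>\<^sup>+w. stop_majorant \<delta> h k w \<partial>stream_space M) = ennreal (majorant_mean \<delta> h (abs_mean M) k)"
proof -
  interpret S: prob_space "stream_space M" by (rule prob_space_stream_space)
  have "(\<lambda>x. ennreal \<bar>x\<bar>) \<in> borel_measurable borel" by measurable
  then have abs_measurable: "(\<lambda>x. ennreal \<bar>x\<bar>) \<in> borel_measurable M"
    by (simp only: measurable_cong_sets[OF sets_eq_borel refl])
  have "stop_majorant \<delta> h k w = ennreal (\<delta> ^ k) * (ennreal (best h) + (\<Sum>i<k. ennreal \<bar>w !! i\<bar>))" for w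
    unfolding stop_majorant_def using d b by (simp add: ennreal_mult ennreal_plus sum_nonneg)
  then have "(\<integral>\<^sup>+w. stop_majorant \<delta> h k w \<partial>stream_space M)
      = ennreal (\<delta> ^ k) * (\<integral>\<^sup>+w. ennreal (best h) + (\<Sum>i<k. ennreal \<bar>w !! i\<bar>) \<partial>stream_space M)"
    by (simp add: nn_integral_cmult)
  also have "(\<integral>\<^sup>+w. ennreal (best h) + (\<Sum>i<k. ennreal \<bar>w !! i\<bar>) \<partial>stream_space M)
      = ennreal (best h) + (\<Sum>i<k. ennreal (abs_mean M))"
    by (simp add: nn_integral_add nn_integral_sum S.emeasure_space_1 nn_integral_snth[OF abs_measurable]
        nn_integral_abs del: sum_ennreal)
  also have "ennreal (\<delta> ^ k) * (ennreal (best h) + (\<Sum>i<k. ennreal (abs_mean M)))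
      = ennreal (majorant_mean \<delta> h (abs_mean M) k)"
    unfolding majorant_mean_def using d b abs_mean_nonneg[of M]
    by (simp add: ennreal_mult ennreal_plus ennreal_of_nat_eq_real_of_nat del: sum_ennreal)
  finally show ?thesis .
qed

lemma nn_integral_sum_stop_majorant:
  assumes "0 \<le> \<delta>" "0 \<le> best h"
  shows "(\<integral>\<^sup>+w. (\<Sum>k<K. stop_majorant \<delta> h k w) \<partial>stream_space M)
    = ennreal (\<Sum>k<K. majorant_mean \<delta> h (abs_mean M) k)"
  using assms by (simp add: nn_integral_sum nn_integral_stop_majorant majorant_mean_nonneg abs_mean_nonneg)

lemma nn_integral_suminf_stop_majorant_shift:
  assumes "0 \<le> \<delta>" "\<delta> < 1" "0 \<le> best h"
  shows "(\<integral>\<^sup>+w. (\<Sum>j. stop_majorant \<delta> h (j + K) w) \<partial>stream_space M)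
    = ennreal (\<Sum>j. majorant_mean \<delta> h (abs_mean M) (j + K))"
proof -
  have "(\<Sum>j. ennreal (majorant_mean \<delta> h (abs_mean M) (j + K)))
      = ennreal (\<Sum>j. majorant_mean \<delta> h (abs_mean M) (j + K))"
    using assms by (intro suminf_ennreal2 majorant_mean_nonneg abs_mean_nonneg summable_majorant_mean_shift)
  then show ?thesis using assms by (simp add: nn_integral_suminf nn_integral_stop_majorant)
qed

lemma U_le_truncation_plus_tail:
  assumes d: "0 \<le> \<delta>" "\<delta> < 1" and p: "decision_rule p" and h: "h \<noteq> []" "0 \<le> best h"
  shows "U \<delta> p M h \<le> (\<integral>\<^sup>+w. (\<Sum>k<K. stop_term \<delta> p h k w) \<partial>stream_space M)
    + ennreal (\<Sum>j. majorant_mean \<delta> h (abs_mean M) (j + K))"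
proof -
  have "stop_payoff \<delta> p h w \<le> (\<Sum>k<K. stop_term \<delta> p h k w) + (\<Sum>j. stop_majorant \<delta> h (j + K) w)" for w
  proof -
    have "(\<Sum>j. stop_term \<delta> p h (j + K) w) \<le> (\<Sum>j. stop_majorant \<delta> h (j + K) w)"
      using stop_term_le_stop_majorant[OF d(1) p h] by (intro suminf_le) auto
    then show ?thesis
      unfolding stop_payoff_eq_suminf suminf_offset[OF summableI, of "\<lambda>k. stop_term \<delta> p h k w" K]
      by (simp add: add.commute add_left_mono)
  qed
  then have "U \<delta> p M h \<le> (\<integral>\<^sup>+w. (\<Sum>k<K. stop_term \<delta> p h k w) + (\<Sum>j. stop_majorant \<delta> h (j + K) w) \<partial>stream_space M)"
    unfolding U_def by (intro nn_integral_mono)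
  also have "\<dots> \<le> (\<integral>\<^sup>+w. (\<Sum>k<K. stop_term \<delta> p h k w) \<partial>stream_space M)
      + (\<integral>\<^sup>+w. (\<Sum>j. stop_majorant \<delta> h (j + K) w) \<partial>stream_space M)"
    by (rule nn_integral_add_le) measurable
  finally show ?thesis using nn_integral_suminf_stop_majorant_shift[OF d h(2)] by simp
qed

lemma U_le_suminf_majorant_mean:
  assumes "0 \<le> \<delta>" "\<delta> < 1" "decision_rule p" "h \<noteq> []" "0 \<le> best h"
  shows "U \<delta> p M h \<le> ennreal (\<Sum>k. majorant_mean \<delta> h (abs_mean M) k)"
  using U_le_truncation_plus_tail[OF assms, of 0] by simp

lemma V_le_suminf_majorant_mean:
  assumes "0 \<le> \<delta>" "\<delta> < 1" "h \<noteq> []" "0 \<le> best h"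
  shows "V \<delta> M h \<le> ennreal (\<Sum>k. majorant_mean \<delta> h (abs_mean M) k)"
  unfolding V_def using U_le_suminf_majorant_mean assms by (auto intro: SUP_least)

lemma V_less_top:
  assumes "0 \<le> \<delta>" "\<delta> < 1" "h \<noteq> []" "0 \<le> best h"
  shows "V \<delta> M h < \<top>"
  using V_le_suminf_majorant_mean[OF assms] by (simp add: le_less_trans)

lemma U_less_top:
  assumes "0 \<le> \<delta>" "\<delta> < 1" "decision_rule p" "h \<noteq> []" "0 \<le> best h"
  shows "U \<delta> p M h < \<top>"
  using U_le_V[OF assms(3)] V_less_top[OF assms(1,2,4,5)] by (rule le_less_trans)

lemma best_le_enn2real_V:
  assumes "0 \<le> \<delta>" "\<delta> < 1" "h \<noteq> []" "0 \<le> best h"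
  shows "best h \<le> enn2real (V \<delta> M h)"
  using enn2real_mono[OF best_le_V[OF prob_space_axioms] V_less_top[OF assms]] assms(4) by simp

end

section \<open>Mixtures of environments\<close>

lemma sets_mix[measurable_cong]: "sets (mix a F G) = sets borel"
proof -
  have "sigma_algebra UNIV (sets (borel :: real measure))"
    using sets.sigma_algebra_axioms[of borel] by simp
  then show ?thesis unfolding mix_def by (simp add: sigma_algebra.sigma_sets_eq)
qed

lemma space_mix: "space (mix a F G) = UNIV"
  using sets_eq_imp_space_eq[OF sets_mix[of a F G]] by simp

lemma measurable_mix_iff: "f \<in> borel_measurable (mix a F G) \<longleftrightarrow> f \<in> borel_measurable borel"
  by (rule measurable_cong_sets[OF sets_mix refl, THEN set_eq_iff[THEN iffD1], rule_format])

lemma emeasure_mix: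
  assumes F: "sets F = sets borel" and G: "sets G = sets borel" and A: "A \<in> sets borel"
  shows "emeasure (mix a F G) A = ennreal a * emeasure F A + ennreal (1 - a) * emeasure G A"
  unfolding mix_def
proof (rule emeasure_measure_of_sigma)
  show "sigma_algebra UNIV (sets (borel :: real measure))"
    using sets.sigma_algebra_axioms[of borel] by simp
  show "countably_additive (sets borel) (\<lambda>A. ennreal a * emeasure F A + ennreal (1 - a) * emeasure G A)"
    unfolding countably_additive_def
  proof (intro allI impI)
    fix B :: "nat \<Rightarrow> real set" assume B: "range B \<subseteq> sets borel" "disjoint_family B"
    then have "range B \<subseteq> sets F" "range B \<subseteq> sets G" using F G by auto
    with B(2) show "(\<Sum>i. ennreal a * emeasure F (B i) + ennreal (1 - a) * emeasure G (B i))
        = ennreal a * emeasure F (\<Union> (range B)) + ennreal (1 - a) * emeasure G (\<Union> (range B))"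
      by (simp add: suminf_add[symmetric] suminf_emeasure)
  qed
qed (use A in \<open>auto simp: positive_def\<close>)

lemma nn_integral_mix:
  assumes F: "sets F = sets borel" and G: "sets G = sets borel"
    and \<phi>: "\<phi> \<in> borel_measurable borel"
  shows "integral\<^sup>N (mix a F G) \<phi> = ennreal a * integral\<^sup>N F \<phi> + ennreal (1 - a) * integral\<^sup>N G \<phi>"
proof -
  have measurable_iff: "u \<in> borel_measurable F \<longleftrightarrow> u \<in> borel_measurable borel"
    "u \<in> borel_measurable G \<longleftrightarrow> u \<in> borel_measurable borel" for u :: "real \<Rightarrow> ennreal"
    using measurable_cong_sets[OF F refl] measurable_cong_sets[OF G refl] by auto
  from \<phi> have "\<phi> \<in> borel_measurable (mix a F G)" by (simp add: measurable_mix_iff)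
  then show ?thesis
  proof induction
    case (cong f g)
    then have "f = g" by (auto simp: space_mix)
    with cong show ?case by simp
  next
    case (set A)
    then have "A \<in> sets borel" "A \<in> sets F" "A \<in> sets G" using F G by (auto simp: sets_mix)
    then show ?case by (simp add: emeasure_mix[OF F G])
  next
    case (mult u c)
    then show ?case
      by (simp add: measurable_mix_iff measurable_iff nn_integral_cmult distrib_left mult.left_commute)
  next
    case (add u v)
    then show ?case
      by (simp add: measurable_mix_iff measurable_iff nn_integral_add distrib_left ac_simps)
  next
    case (seq U)
    then have U: "\<And>i. U i \<in> borel_measurable F" "\<And>i. U i \<in> borel_measurable G"
      by (simp_all add: measurable_mix_iff measurable_iff)
    have inc: "incseq (\<lambda>i. c * integral\<^sup>N M (U i))" for c and M :: "real measure"
      using seq.hyps(3) by (auto simp: incseq_def le_fun_def intro!: mult_left_mono nn_integral_mono)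
    have "integral\<^sup>N (mix a F G) (Sup (range U)) = (SUP i. integral\<^sup>N (mix a F G) (U i))"
      using seq.hyps(1,3) by (simp add: SUP_apply[abs_def] nn_integral_monotone_convergence_SUP)
    also have "\<dots> = (SUP i. ennreal a * integral\<^sup>N F (U i)) + (SUP i. ennreal (1 - a) * integral\<^sup>N G (U i))"
      using seq.IH by (simp add: ennreal_SUP_add[OF inc inc])
    also have "\<dots> = ennreal a * integral\<^sup>N F (Sup (range U)) + ennreal (1 - a) * integral\<^sup>N G (Sup (range U))"
      using U seq.hyps(3)
      by (simp add: SUP_mult_left_ennreal[symmetric] SUP_apply[abs_def] nn_integral_monotone_convergence_SUP)
    finally show ?case .
  qed
qed

lemma consistent_mix:
  assumes "sets F = sets borel" "sets G = sets borel" and "consistent G h" and "0 \<le> a" "a < 1"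
  shows "consistent (mix a F G) h"
proof -
  have "0 < emeasure (mix a F G) {x}" if "0 < emeasure G {x}" for x
  proof -
    have "0 < ennreal (1 - a) * emeasure G {x}"
      using that assms(5) by (simp add: ennreal_zero_less_mult_iff)
    also have "\<dots> \<le> emeasure (mix a F G) {x}" by (simp add: emeasure_mix[OF assms(1,2)])
    finally show ?thesis .
  qed
  then have "0 < (\<Prod>x\<leftarrow>l. emeasure (mix a F G) {x})" if "0 < (\<Prod>x\<leftarrow>l. emeasure G {x})" for l
    using that by (induction l) (auto simp: ennreal_zero_less_mult_iff)
  with assms(3) show ?thesis unfolding consistent_def by blast
qed

lemma environment_mix:
  assumes "environment F" "environment G" "0 \<le> a" "a \<le> 1"
  shows "environment (mix a F G)"
proof -
  interpret F: environment F by fact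
  interpret G: environment G by fact
  have abs: "(\<lambda>x. ennreal \<bar>x\<bar>) \<in> borel_measurable (borel :: real measure)" by measurable
  have "ennreal a + ennreal (1 - a) = 1" using assms(3,4) by (subst ennreal_plus[symmetric]) auto
  then have "prob_space (mix a F G)"
    using F.emeasure_space_1 G.emeasure_space_1
    by (intro prob_spaceI) (simp add: space_mix emeasure_mix F.sets_eq_borel G.sets_eq_borel
        sets_eq_imp_space_eq[OF F.sets_eq_borel] sets_eq_imp_space_eq[OF G.sets_eq_borel])
  moreover have "(\<integral>\<^sup>+x. ennreal \<bar>x\<bar> \<partial>mix a F G) < \<top>"
    using F.nn_integral_abs G.nn_integral_abs
    by (simp add: nn_integral_mix[OF F.sets_eq_borel G.sets_eq_borel abs] ennreal_mult_less_top)
  then have "integrable (mix a F G) (\<lambda>x. x)"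
    by (simp add: integrable_iff_bounded measurable_mix_iff)
  ultimately show ?thesis by (simp add: environment_def environment_axioms_def sets_mix)
qed

text \<open>Bound on how much payoffs change when F is replaced by mix a F G: the first K
  alternatives are drawn from the F-component with probability at least a ^ K, and whatever
  happens from round K on is controlled by the tail of the majorant series.\<close>
definition mix_error :: "real \<Rightarrow> real list \<Rightarrow> real \<Rightarrow> real \<Rightarrow> nat \<Rightarrow> real" where
  "mix_error \<delta> h m a K = (1 - a ^ K) * (\<Sum>k. majorant_mean \<delta> h m k) + (\<Sum>j. majorant_mean \<delta> h m (j + K))"

lemma mix_error_nonneg:
  assumes "0 \<le> \<delta>" "\<delta> < 1" "0 \<le> best h" "0 \<le> m" "0 \<le> a" "a \<le> 1"
  shows "0 \<le> mix_error \<delta> h m a K"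
  unfolding mix_error_def using assms
  by (intro add_nonneg_nonneg mult_nonneg_nonneg suminf_nonneg majorant_mean_nonneg
      summable_majorant_mean summable_majorant_mean_shift) (auto simp: power_le_one)

lemma sum_majorant_mean_mix_le:
  assumes d: "0 \<le> \<delta>" "\<delta> < 1" and b: "0 \<le> best h" and a: "0 \<le> a" "a \<le> 1"
    and m: "0 \<le> mF" "0 \<le> mG"
  shows "(\<Sum>k<K. majorant_mean \<delta> h (a * mF + (1 - a) * mG) k)
    \<le> a ^ K * (\<Sum>k<K. majorant_mean \<delta> h mF k) + (1 - a ^ K) * (\<Sum>k. majorant_mean \<delta> h (mF + mG) k)"
proof -
  have "majorant_mean \<delta> h (a * mF + (1 - a) * mG) k
      \<le> a ^ K * majorant_mean \<delta> h mF k + (1 - a ^ K) * majorant_mean \<delta> h (mF + mG) k" if "k < K" for k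
  proof -
    have "a ^ K \<le> a" using that a power_decreasing[of 1 K a] by simp
    then have "a * mF + (1 - a) * mG \<le> mF + (1 - a ^ K) * mG"
      using a m by (intro add_mono mult_right_mono) (auto simp: mult_left_le_one_le)
    then have "real k * (a * mF + (1 - a) * mG) \<le> real k * (mF + (1 - a ^ K) * mG)"
      by (rule mult_left_mono) simp
    then have "best h + real k * (a * mF + (1 - a) * mG)
        \<le> a ^ K * (best h + real k * mF) + (1 - a ^ K) * (best h + real k * (mF + mG))"
      by (simp add: algebra_simps)
    then have "\<delta> ^ k * (best h + real k * (a * mF + (1 - a) * mG))
        \<le> \<delta> ^ k * (a ^ K * (best h + real k * mF) + (1 - a ^ K) * (best h + real k * (mF + mG)))"
      using d by (intro mult_left_mono) auto
    then show ?thesis unfolding majorant_mean_def by (simp add: algebra_simps)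
  qed
  then have "(\<Sum>k<K. majorant_mean \<delta> h (a * mF + (1 - a) * mG) k)
      \<le> a ^ K * (\<Sum>k<K. majorant_mean \<delta> h mF k) + (1 - a ^ K) * (\<Sum>k<K. majorant_mean \<delta> h (mF + mG) k)"
    unfolding sum_distrib_left sum.distrib[symmetric] by (rule sum_mono) simp
  also have "(\<Sum>k<K. majorant_mean \<delta> h (mF + mG) k) \<le> (\<Sum>k. majorant_mean \<delta> h (mF + mG) k)"
    using d b m by (intro sum_le_suminf summable_majorant_mean majorant_mean_nonneg) auto
  finally show ?thesis using a by (simp add: mult_left_mono power_le_one)
qed

locale environment_mixture = F: environment F + G: environment G
  for F G :: "real measure" and a :: real +
  assumes a_nonneg: "0 \<le> a" and a_le_1: "a \<le> 1"
begin

sublocale H: environment "mix a F G"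
  by (rule environment_mix) (unfold_locales, fact a_nonneg, fact a_le_1)

sublocale stream_domination F "mix a F G" "ennreal a"
proof
  show "sets F = sets (mix a F G)" by (simp add: F.sets_eq_borel sets_mix)
  show "ennreal a * integral\<^sup>N F \<phi> \<le> integral\<^sup>N (mix a F G) \<phi>" if "\<phi> \<in> borel_measurable F" for \<phi>
  proof -
    have "\<phi> \<in> borel_measurable borel"
      using that by (simp only: measurable_cong_sets[OF F.sets_eq_borel refl])
    then show ?thesis by (simp add: nn_integral_mix[OF F.sets_eq_borel G.sets_eq_borel])
  qed
qed

lemma abs_mean_mix: "abs_mean (mix a F G) = a * abs_mean F + (1 - a) * abs_mean G"
proof -
  have "(\<lambda>x. ennreal \<bar>x\<bar>) \<in> borel_measurable borel" by measurable
  then have "ennreal (abs_mean (mix a F G)) = ennreal (a * abs_mean F + (1 - a) * abs_mean G)"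
    using a_nonneg a_le_1 abs_mean_nonneg[of F] abs_mean_nonneg[of G]
    by (simp add: H.nn_integral_abs[symmetric] F.nn_integral_abs[symmetric] G.nn_integral_abs[symmetric]
        nn_integral_mix[OF F.sets_eq_borel G.sets_eq_borel] ennreal_mult ennreal_plus)
  then show ?thesis
    using a_nonneg a_le_1 abs_mean_nonneg[of F] abs_mean_nonneg[of G] abs_mean_nonneg[of "mix a F G"]
    by (subst (asm) ennreal_inj) auto
qed

lemma abs_mean_le: "abs_mean F \<le> abs_mean F + abs_mean G" "abs_mean (mix a F G) \<le> abs_mean F + abs_mean G"
  using a_nonneg a_le_1 abs_mean_nonneg[of F] abs_mean_nonneg[of G]
  by (auto simp: abs_mean_mix intro!: add_mono mult_left_le_one_le)

lemma U_le_U_mix: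
  assumes d: "0 \<le> \<delta>" "\<delta> < 1" and p: "decision_rule p" and h: "h \<noteq> []" "0 \<le> best h"
  shows "U \<delta> p F h \<le> U \<delta> p (mix a F G) h + ennreal (mix_error \<delta> h (abs_mean F + abs_mean G) a K)"
proof -
  let ?m = "abs_mean F + abs_mean G" and ?f = "\<lambda>w. \<Sum>k<K. stop_term \<delta> p h k w"
  define C where "C = (\<Sum>k. majorant_mean \<delta> h ?m k)"
  define \<tau> where "\<tau> = (\<Sum>j. majorant_mean \<delta> h ?m (j + K))"
  have aK: "0 \<le> a ^ K" "a ^ K \<le> 1" using a_nonneg a_le_1 by (auto simp: power_le_one)
  have nonneg: "0 \<le> C" "0 \<le> \<tau>"
    unfolding C_def \<tau>_def using d h abs_mean_nonneg[of F] abs_mean_nonneg[of G]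
    by (auto intro!: suminf_nonneg majorant_mean_nonneg summable_majorant_mean summable_majorant_mean_shift)
  have trunc: "U \<delta> p F h \<le> integral\<^sup>N (stream_space F) ?f + ennreal \<tau>"
    using F.U_le_truncation_plus_tail[OF d p h, of K] suminf_majorant_mean_shift_mono[OF d abs_mean_le(1)]
    unfolding \<tau>_def by (meson add_left_mono ennreal_leI order_trans)
  have total: "U \<delta> p F h \<le> ennreal C"
    using F.U_le_suminf_majorant_mean[OF d p h] suminf_majorant_mean_shift_mono[OF d abs_mean_le(1), of h 0, simplified]
    unfolding C_def by (meson ennreal_leI order_trans)
  have "ennreal (a ^ K) + ennreal (1 - a ^ K) = 1" using aK by (subst ennreal_plus[symmetric]) auto
  then have "U \<delta> p F h = ennreal (a ^ K) * U \<delta> p F h + ennreal (1 - a ^ K) * U \<delta> p F h"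
    by (metis distrib_right mult_1)
  also have "\<dots> \<le> ennreal (a ^ K) * (integral\<^sup>N (stream_space F) ?f + ennreal \<tau>)
      + ennreal (1 - a ^ K) * ennreal C"
    by (intro add_mono mult_left_mono trunc total) simp_all
  also have "\<dots> \<le> U \<delta> p (mix a F G) h + ennreal \<tau> + ennreal ((1 - a ^ K) * C)"
  proof -
    have "ennreal (a ^ K) * integral\<^sup>N (stream_space F) ?f \<le> integral\<^sup>N (stream_space (mix a F G)) ?f"
      using nn_integral_stream_space_ge[of K ?f] a_nonneg
      by (simp add: prefix_determined_sum_stop_term ennreal_power)
    also have "\<dots> \<le> U \<delta> p (mix a F G) h" by (rule truncation_le_U)
    finally have "ennreal (a ^ K) * integral\<^sup>N (stream_space F) ?f \<le> U \<delta> p (mix a F G) h" .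
    moreover have "ennreal (a ^ K) * ennreal \<tau> \<le> ennreal \<tau>"
      using aK nonneg by (simp add: mult_left_le_one_le ennreal_mult'[symmetric])
    ultimately show ?thesis
      using aK by (simp add: distrib_left ennreal_mult'[symmetric] add_mono)
  qed
  also have "\<dots> = U \<delta> p (mix a F G) h + ennreal (mix_error \<delta> h ?m a K)"
    using aK nonneg unfolding mix_error_def C_def[symmetric] \<tau>_def[symmetric] by (simp add: ac_simps)
  finally show ?thesis .
qed

lemma U_mix_le_U:
  assumes d: "0 \<le> \<delta>" "\<delta> < 1" and p: "decision_rule p" and h: "h \<noteq> []" "0 \<le> best h"
  shows "U \<delta> p (mix a F G) h \<le> U \<delta> p F h + ennreal (mix_error \<delta> h (abs_mean F + abs_mean G) a K)"
proof -
  let ?m = "abs_mean F + abs_mean G" and ?f = "\<lambda>w. \<Sum>k<K. stop_term \<delta> p h k w"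
    and ?B = "\<lambda>w. \<Sum>k<K. stop_majorant \<delta> h k w"
  define C where "C = (\<Sum>k. majorant_mean \<delta> h ?m k)"
  define \<tau> where "\<tau> = (\<Sum>j. majorant_mean \<delta> h ?m (j + K))"
  define BF where "BF = (\<Sum>k<K. majorant_mean \<delta> h (abs_mean F) k)"
  have aK: "0 \<le> a ^ K" "a ^ K \<le> 1" using a_nonneg a_le_1 by (auto simp: power_le_one)
  have nonneg: "0 \<le> C" "0 \<le> \<tau>" "0 \<le> BF"
    unfolding C_def \<tau>_def BF_def using d h abs_mean_nonneg[of F] abs_mean_nonneg[of G]
    by (auto intro!: suminf_nonneg sum_nonneg majorant_mean_nonneg summable_majorant_mean
        summable_majorant_mean_shift)
  have "integral\<^sup>N (stream_space (mix a F G)) ?f + ennreal (a ^ K) * integral\<^sup>N (stream_space F) ?B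
      \<le> ennreal (a ^ K) * integral\<^sup>N (stream_space F) ?f + integral\<^sup>N (stream_space (mix a F G)) ?B"
    using nn_integral_stream_space_excess[OF prefix_determined_sum_stop_term _ prefix_determined_sum_stop_majorant]
      stop_term_le_stop_majorant[OF d(1) p h] a_nonneg
    by (simp add: le_fun_def sum_mono ennreal_power)
  also have "\<dots> \<le> U \<delta> p F h + ennreal (a ^ K * BF + (1 - a ^ K) * C)"
  proof (rule add_mono)
    have "ennreal (a ^ K) * integral\<^sup>N (stream_space F) ?f \<le> 1 * integral\<^sup>N (stream_space F) ?f"
      using aK by (intro mult_right_mono) simp_all
    then show "ennreal (a ^ K) * integral\<^sup>N (stream_space F) ?f \<le> U \<delta> p F h"
      using truncation_le_U[where M = F] by (simp add: order_trans)
    have "(\<Sum>k<K. majorant_mean \<delta> h (abs_mean (mix a F G)) k) \<le> a ^ K * BF + (1 - a ^ K) * C"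
      unfolding abs_mean_mix BF_def C_def
      using sum_majorant_mean_mix_le[OF d h(2) a_nonneg a_le_1 abs_mean_nonneg abs_mean_nonneg] .
    then show "integral\<^sup>N (stream_space (mix a F G)) ?B \<le> ennreal (a ^ K * BF + (1 - a ^ K) * C)"
      using H.nn_integral_sum_stop_majorant[OF d(1) h(2)] by (simp add: ennreal_leI)
  qed
  finally have "ennreal (a ^ K * BF) + integral\<^sup>N (stream_space (mix a F G)) ?f
      \<le> ennreal (a ^ K * BF) + (U \<delta> p F h + ennreal ((1 - a ^ K) * C))"
    using F.nn_integral_sum_stop_majorant[OF d(1) h(2)] aK nonneg
    by (simp add: BF_def ennreal_mult' ac_simps)
  then have trunc: "integral\<^sup>N (stream_space (mix a F G)) ?f \<le> U \<delta> p F h + ennreal ((1 - a ^ K) * C)"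
    by (simp add: ennreal_add_left_cancel_le)
  have "U \<delta> p (mix a F G) h \<le> integral\<^sup>N (stream_space (mix a F G)) ?f + ennreal \<tau>"
    using H.U_le_truncation_plus_tail[OF d p h, of K] suminf_majorant_mean_shift_mono[OF d abs_mean_le(2)]
    unfolding \<tau>_def by (meson add_left_mono ennreal_leI order_trans)
  also have "\<dots> \<le> U \<delta> p F h + ennreal (mix_error \<delta> h ?m a K)"
    using add_right_mono[OF trunc, of "ennreal \<tau>"] aK nonneg
    unfolding mix_error_def C_def[symmetric] \<tau>_def[symmetric] by (simp add: ac_simps)
  finally show ?thesis .
qed

lemma V_le_V_mix:
  assumes "0 \<le> \<delta>" "\<delta> < 1" "h \<noteq> []" "0 \<le> best h"
  shows "V \<delta> F h \<le> V \<delta> (mix a F G) h + ennreal (mix_error \<delta> h (abs_mean F + abs_mean G) a K)"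
  unfolding V_def[of \<delta> F h]
proof (rule SUP_least)
  fix q assume "q \<in> {p. decision_rule p}"
  then have q: "decision_rule q" by simp
  show "U \<delta> q F h \<le> V \<delta> (mix a F G) h + ennreal (mix_error \<delta> h (abs_mean F + abs_mean G) a K)"
    using U_le_U_mix[OF assms(1,2) q assms(3,4), of K] U_le_V[OF q, of \<delta> "mix a F G" h]
    by (meson add_right_mono order_trans)
qed

lemma V_mix_le_V:
  assumes "0 \<le> \<delta>" "\<delta> < 1" "h \<noteq> []" "0 \<le> best h"
  shows "V \<delta> (mix a F G) h \<le> V \<delta> F h + ennreal (mix_error \<delta> h (abs_mean F + abs_mean G) a K)"
  unfolding V_def[of \<delta> "mix a F G" h]
proof (rule SUP_least)
  fix q assume "q \<in> {p. decision_rule p}"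
  then have q: "decision_rule q" by simp
  show "U \<delta> q (mix a F G) h \<le> V \<delta> F h + ennreal (mix_error \<delta> h (abs_mean F + abs_mean G) a K)"
    using U_mix_le_U[OF assms(1,2) q assms(3,4), of K] U_le_V[OF q, of \<delta> F h]
    by (meson add_right_mono order_trans)
qed

end

section \<open>Continuity along mixtures\<close>

lemma abs_enn2real_diff_le:
  fixes x y :: ennreal
  assumes "x \<le> y + ennreal e" "y \<le> x + ennreal e" "x < \<top>" "y < \<top>" "0 \<le> e"
  shows "\<bar>enn2real x - enn2real y\<bar> \<le> e"
proof -
  obtain r s where "x = ennreal r" "y = ennreal s" "0 \<le> r" "0 \<le> s"
    using assms(3,4) by (metis enn2real_nonneg ennreal_enn2real less_top)
  with assms show ?thesis by (simp add: abs_le_iff ennreal_plus[symmetric] del: ennreal_plus)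
qed

lemma tendsto_at_left_1_of_mix_error:
  fixes f :: "real \<Rightarrow> real"
  assumes d: "0 \<le> \<delta>" "\<delta> < 1" and bound: "\<And>a K. 0 \<le> a \<Longrightarrow> a < 1 \<Longrightarrow> \<bar>f a - L\<bar> \<le> mix_error \<delta> h m a K"
  shows "(f \<longlongrightarrow> L) (at_left 1)"
proof (rule tendstoI)
  fix e :: real assume e: "0 < e"
  have "(\<lambda>K. \<Sum>j. majorant_mean \<delta> h m (j + K)) \<longlonglongrightarrow> 0"
    by (rule suminf_exist_split2[OF summable_majorant_mean[OF d]])
  then obtain K where K: "(\<Sum>j. majorant_mean \<delta> h m (j + K)) < e / 2"
    using e by (metis (no_types, lifting) LIMSEQ_D abs_less_iff diff_zero half_gt_zero le_refl real_norm_def)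
  have "((\<lambda>a. (1 - a ^ K) * (\<Sum>k. majorant_mean \<delta> h m k)) \<longlongrightarrow> (1 - 1 ^ K) * (\<Sum>k. majorant_mean \<delta> h m k)) (at_left 1)"
    by (intro tendsto_intros)
  moreover have "(1 - 1 ^ K) * (\<Sum>k. majorant_mean \<delta> h m k) < e / 2" using e by simp
  ultimately have "\<forall>\<^sub>F a in at_left 1. (1 - a ^ K) * (\<Sum>k. majorant_mean \<delta> h m k) < e / 2"
    by (rule order_tendstoD(2))
  moreover have "\<forall>\<^sub>F a in at_left 1. a \<in> {0<..<1::real}"
    by (rule eventually_at_left_real) simp
  ultimately show "\<forall>\<^sub>F a in at_left 1. dist (f a) L < e"
  proof eventually_elim
    case (elim a)
    then have "\<bar>f a - L\<bar> \<le> mix_error \<delta> h m a K" by (intro bound) auto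
    with elim K show ?case unfolding mix_error_def dist_real_def by linarith
  qed
qed

lemma environment_mixtureI:
  "environment F \<Longrightarrow> environment G \<Longrightarrow> 0 \<le> a \<Longrightarrow> a \<le> 1 \<Longrightarrow> environment_mixture F G a"
  by (simp add: environment_mixture_def environment_mixture_axioms_def)

lemma tendsto_U_mix:
  assumes F: "environment F" and G: "environment G" and d: "0 \<le> \<delta>" "\<delta> < 1"
    and p: "decision_rule p" and h: "h \<noteq> []" "0 \<le> best h"
  shows "((\<lambda>a. enn2real (U \<delta> p (mix a F G) h)) \<longlongrightarrow> enn2real (U \<delta> p F h)) (at_left 1)"
proof (rule tendsto_at_left_1_of_mix_error[OF d])
  fix a :: real and K assume a: "0 \<le> a" "a < 1"
  interpret environment_mixture F G a using environment_mixtureI[OF F G] a by simp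
  show "\<bar>enn2real (U \<delta> p (mix a F G) h) - enn2real (U \<delta> p F h)\<bar> \<le> mix_error \<delta> h (abs_mean F + abs_mean G) a K"
    using U_mix_le_U[OF d p h] U_le_U_mix[OF d p h] d h a abs_mean_nonneg[of F] abs_mean_nonneg[of G]
      F.U_less_top[OF d p h] H.U_less_top[OF d p h]
    by (intro abs_enn2real_diff_le mix_error_nonneg) auto
qed

lemma tendsto_V_mix:
  assumes F: "environment F" and G: "environment G" and d: "0 \<le> \<delta>" "\<delta> < 1"
    and h: "h \<noteq> []" "0 \<le> best h"
  shows "((\<lambda>a. enn2real (V \<delta> (mix a F G) h)) \<longlongrightarrow> enn2real (V \<delta> F h)) (at_left 1)"
proof (rule tendsto_at_left_1_of_mix_error[OF d])
  fix a :: real and K assume a: "0 \<le> a" "a < 1"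
  interpret environment_mixture F G a using environment_mixtureI[OF F G] a by simp
  show "\<bar>enn2real (V \<delta> (mix a F G) h) - enn2real (V \<delta> F h)\<bar> \<le> mix_error \<delta> h (abs_mean F + abs_mean G) a K"
    using V_mix_le_V[OF d h] V_le_V_mix[OF d h] d h a abs_mean_nonneg[of F] abs_mean_nonneg[of G]
      F.V_less_top[OF d h] H.V_less_top[OF d h]
    by (intro abs_enn2real_diff_le mix_error_nonneg) auto
qed

lemma environment_if_environments: "M \<in> environments X \<Longrightarrow> environment M"
  unfolding environments_def environment_def environment_axioms_def by auto

lemma (in environment) U_div_V_eq_enn2real:
  assumes d: "0 \<le> \<delta>" "\<delta> < 1" and p: "decision_rule p" and h: "h \<noteq> []" "0 < best h"
  shows "U \<delta> p M h / V \<delta> M h = ennreal (enn2real (U \<delta> p M h) / enn2real (V \<delta> M h))"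
proof -
  have "0 < enn2real (V \<delta> M h)" using best_le_enn2real_V[OF d h(1)] h(2) by simp
  then show ?thesis
    using U_less_top[OF d p h(1)] V_less_top[OF d h(1)] h(2) by (subst divide_ennreal[symmetric]) auto
qed

lemma INF_consistent_le_ratio:
  assumes env: "\<F> \<subseteq> environments X" and convex: "convex_envs \<F>"
    and F: "F \<in> \<F>" and G: "G \<in> \<F>" "consistent G h"
    and d: "0 \<le> \<delta>" "\<delta> < 1" and p: "decision_rule p" and h: "h \<noteq> []" "0 < best h"
  shows "(INF H \<in> {H \<in> \<F>. consistent H h}. U \<delta> p H h / V \<delta> H h) \<le> U \<delta> p F h / V \<delta> F h"
proof -
  have F_env: "environment F" and G_env: "environment G"
    using env F G by (auto intro: environment_if_environments)
  interpret F: environment F by (fact F_env)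
  let ?ratio = "\<lambda>M. ennreal (enn2real (U \<delta> p M h) / enn2real (V \<delta> M h))"
  have "0 < enn2real (V \<delta> F h)" using F.best_le_enn2real_V[OF d h(1)] h(2) by simp
  then have lim: "((\<lambda>a. ?ratio (mix a F G)) \<longlongrightarrow> ?ratio F) (at_left 1)"
    using h by (intro tendsto_ennrealI tendsto_divide tendsto_U_mix tendsto_V_mix F_env G_env d p) auto
  have "\<forall>\<^sub>F a in at_left 1. a \<in> {0<..<1::real}"
    by (rule eventually_at_left_real) simp
  then have ev: "\<forall>\<^sub>F a in at_left 1. (INF H \<in> {H \<in> \<F>. consistent H h}. U \<delta> p H h / V \<delta> H h) \<le> ?ratio (mix a F G)"
  proof eventually_elim
    case (elim a)
    then interpret environment_mixture F G a by (intro environment_mixtureI F_env G_env) auto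
    have "mix a F G \<in> {H \<in> \<F>. consistent H h}"
      using convex F G consistent_mix[OF F.sets_eq_borel G.sets_eq_borel G(2)] elim
      unfolding convex_envs_def by auto
    then have "(INF H \<in> {H \<in> \<F>. consistent H h}. U \<delta> p H h / V \<delta> H h) \<le> U \<delta> p (mix a F G) h / V \<delta> (mix a F G) h"
      by (rule INF_lower)
    then show ?case by (simp add: H.U_div_V_eq_enn2real[OF d p h])
  qed
  have "(INF H \<in> {H \<in> \<F>. consistent H h}. U \<delta> p H h / V \<delta> H h) \<le> ?ratio F"
    by (rule tendsto_lowerbound[OF lim ev]) simp
  then show ?thesis by (simp add: F.U_div_V_eq_enn2real[OF d p h])
qed

theorem proposition2:
  fixes \<delta> x0 :: real and X :: "real set" and \<F> :: "real measure set"
    and p :: "real list \<Rightarrow> real" and xs :: "real list"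
  assumes "0 < \<delta>" and "\<delta> < 1"
    and "X \<in> sets borel" and "X \<subseteq> {0..}" and "0 \<in> X" and "x0 > 0"
    and "\<F> \<subseteq> environments X" and "convex_envs \<F>"
    and "decision_rule p"
    and "set xs \<subseteq> X"
    and "{F \<in> \<F>. consistent F (x0 # xs)} \<noteq> {}"
  shows "(INF F \<in> {F \<in> \<F>. consistent F (x0 # xs)}. U \<delta> p F (x0 # xs) / V \<delta> F (x0 # xs))
       = (INF F \<in> \<F>. U \<delta> p F (x0 # xs) / V \<delta> F (x0 # xs))"
proof (rule antisym)
  obtain G where G: "G \<in> \<F>" "consistent G (x0 # xs)" using assms(11) by blast
  have "x0 \<le> best (x0 # xs)" unfolding best_def by simp
  then have "0 < best (x0 # xs)" using \<open>x0 > 0\<close> by linarith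
  then show "(INF F \<in> {F \<in> \<F>. consistent F (x0 # xs)}. U \<delta> p F (x0 # xs) / V \<delta> F (x0 # xs))
      \<le> (INF F \<in> \<F>. U \<delta> p F (x0 # xs) / V \<delta> F (x0 # xs))"
    using assms(1,2,7-9) G by (intro INF_greatest INF_consistent_le_ratio) auto
qed (rule INF_superset_mono; auto)

end
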